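(* Assume the instance is non-degenerate and let $x\in S\cap\mathbb{R}^n$ be such that the (underlying undirected graph of the) tangent digraph $\mathcal{G}(x)$ is a spanning tree. If $x$ is not a local optimum, then there exists $e\in E^\circ(x)$ such that $V(\mathcal{T}(e,x))$ is a feasible descent direction at $x$.
   Context: $\mathbb{R}_{\max}=\mathbb{R}\cup\{-\infty\}$, $\chi_J$ the indicator vector of $J$. Data: $A^\pm=(a^\pm_{i,j})\in\mathbb{R}_{\max}^{m\times n}$, $C=(c_{k,j})\in\mathbb{R}_{\max}^{p\times n}$, $\mu^+\in\mathbb{Z}_{\ge0}^p$, $\mu^-\in\mathbb{Z}_{\ge0}^n$; $A=(a_{i,j})$, $a_{i,j}=\max(a^+_{i,j},a^-_{i,j})$. $f(x)=\sum_k\mu^+_k\max_j(c_{k,j}+x_j)-\sum_j\mu^-_jx_j$; $S=\{x:\max_j(a^+_{i,j}+x_j)\ge\max_j(a^-_{i,j}+x_j)\ \forall i\}$. Standing assumptions: each row of $A$ and $C$ has a finite entry; $\sum_k\mu^+_k=\sum_j\mu^-_j$; the undirected graph on $\{u_k\}\cup[n]\cup\{w_i\}$ with edges $\{u_k,j\}$ ($c_{k,j}\ne-\infty$), $\{w_i,j\}$ ($a_{i,j}\ne-\infty$) is connected. Non-degenerate: no square submatrix of $Q$ ($C$ stacked above $A$) with finite tropical determinant $\max_\sigma\sum_iq_{i,\sigma(i)}$ has two permutations attaining that maximum. $x\in S\cap\mathbb{R}^n$ is a local optimum if there is $\delta>0$ with $f(y)\ge f(x)$ for all $y\in S\cap\mathbb{R}^n$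 with $\max_j|x_j-y_j|<\delta$. $\epsilon(x)$ is the smallest positive value among $|(a_{i,j_1}+x_{j_1})-(a_{i,j_2}+x_{j_2})|$ and $|(c_{k,j_1}+x_{j_1})-(c_{k,j_2}+x_{j_2})|$; $J\subset[n]$ is a feasible descent direction at $x$ if $x+\delta\chi_J\in S$ and $f(x+\delta\chi_J)<f(x)$ for all $0<\delta<\epsilon(x)$. Tangent digraph $\mathcal{G}(x)$: vertices $U=\{u_1..u_p\}$, $V=[n]$, $W=\{w_1..w_m\}$; $E_1(x)=\{(u_k,j):\max_{j'}(c_{k,j'}+x_{j'})=c_{k,j}+x_j\}$, $E_2(x)=\{(w_i,j):\max_{j'}(a_{i,j'}+x_{j'})=a^-_{i,j}+x_j\}$, $E_3(x)=\{(j,w_i):\max_{j'}(a_{i,j'}+x_{j'})=a^+_{i,j}+x_j\}$. $\mathcal{N}^-_V(w_i,x)=\{j:(j,w_i)\in E_3(x)\}$; $E^\circ(x)=E_1(x)\cup E_2(x)\cup\{(j,w_i)\in E_3(x):|\mathcal{N}^-_V(w_i,x)|\ge2\}$. For an edge $e$, removing $e$ from the tree $\mathcal{G}(x)$ leaves two trees, and $\mathcal{T}(e,x)$ is the one containing the endpoint of $e$ in $U\cup W$; $V(\mathcal{T}(e,x))$ is its vertex set in $V$. *)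

theory Defs
  imports Complex_Main "HOL-Library.Extended_Real"
begin

text \<open>Indices: rows of C are 0..<p, columns 0..<n, rows of A are 0..<m.
  Entries of R_max are ereal values different from \<infinity> (assumed in the theorem).\<close>

datatype tvert = U nat | V nat | W nat

definition amat :: "(nat \<Rightarrow> nat \<Rightarrow> ereal) \<Rightarrow> (nat \<Rightarrow> nat \<Rightarrow> ereal) \<Rightarrow> nat \<Rightarrow> nat \<Rightarrow> ereal" where
  "amat Ap Am i j = max (Ap i j) (Am i j)"

definition rmax :: "nat \<Rightarrow> (nat \<Rightarrow> nat \<Rightarrow> ereal) \<Rightarrow> nat \<Rightarrow> (nat \<Rightarrow> real) \<Rightarrow> ereal" where
  "rmax n M i x = Max ((\<lambda>j. M i j + ereal (x j)) ` {..<n})"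

definition objf :: "nat \<Rightarrow> nat \<Rightarrow> (nat \<Rightarrow> nat \<Rightarrow> ereal) \<Rightarrow> (nat \<Rightarrow> nat) \<Rightarrow> (nat \<Rightarrow> nat)
    \<Rightarrow> (nat \<Rightarrow> real) \<Rightarrow> real" where
  "objf n p C mup mum x =
     (\<Sum>k<p. real (mup k) * real_of_ereal (rmax n C k x)) - (\<Sum>j<n. real (mum j) * x j)"

definition feasS :: "nat \<Rightarrow> nat \<Rightarrow> (nat \<Rightarrow> nat \<Rightarrow> ereal) \<Rightarrow> (nat \<Rightarrow> nat \<Rightarrow> ereal)
    \<Rightarrow> (nat \<Rightarrow> real) \<Rightarrow> bool" where
  "feasS m n Ap Am x \<longleftrightarrow> (\<forall>i<m. rmax n Ap i x \<ge> rmax n Am i x)"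

definition local_opt :: "nat \<Rightarrow> nat \<Rightarrow> nat \<Rightarrow> (nat \<Rightarrow> nat \<Rightarrow> ereal) \<Rightarrow> (nat \<Rightarrow> nat \<Rightarrow> ereal)
    \<Rightarrow> (nat \<Rightarrow> nat \<Rightarrow> ereal) \<Rightarrow> (nat \<Rightarrow> nat) \<Rightarrow> (nat \<Rightarrow> nat) \<Rightarrow> (nat \<Rightarrow> real) \<Rightarrow> bool" where
  "local_opt m n p Ap Am C mup mum x \<longleftrightarrow> feasS m n Ap Am x \<and>
     (\<exists>\<delta>>0. \<forall>y. feasS m n Ap Am y \<and> (\<forall>j<n. \<bar>x j - y j\<bar> < \<delta>)
        \<longrightarrow> objf n p C mup mum y \<ge> objf n p C mup mum x)"

text \<open>The values whose smallest positive element is epsilon(x).\<close>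
definition gaps :: "nat \<Rightarrow> nat \<Rightarrow> nat \<Rightarrow> (nat \<Rightarrow> nat \<Rightarrow> ereal) \<Rightarrow> (nat \<Rightarrow> nat \<Rightarrow> ereal)
    \<Rightarrow> (nat \<Rightarrow> nat \<Rightarrow> ereal) \<Rightarrow> (nat \<Rightarrow> real) \<Rightarrow> real set" where
  "gaps m n p Ap Am C x =
     {\<bar>(real_of_ereal (amat Ap Am i j1) + x j1) - (real_of_ereal (amat Ap Am i j2) + x j2)\<bar> | i j1 j2.
        i < m \<and> j1 < n \<and> j2 < n \<and> amat Ap Am i j1 \<noteq> -\<infinity> \<and> amat Ap Am i j2 \<noteq> -\<infinity>}
   \<union> {\<bar>(real_of_ereal (C k j1) + x j1) - (real_of_ereal (C k j2) + x j2)\<bar> | k j1 j2.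
        k < p \<and> j1 < n \<and> j2 < n \<and> C k j1 \<noteq> -\<infinity> \<and> C k j2 \<noteq> -\<infinity>}"

definition shiftv :: "(nat \<Rightarrow> real) \<Rightarrow> real \<Rightarrow> nat set \<Rightarrow> nat \<Rightarrow> real" where
  "shiftv x \<delta> J = (\<lambda>j. x j + (if j \<in> J then \<delta> else 0))"

text \<open>0 < delta < epsilon(x) is rendered as: delta below every positive gap
  (epsilon(x) = +infinity if there is no positive gap).\<close>
definition descent_dir :: "nat \<Rightarrow> nat \<Rightarrow> nat \<Rightarrow> (nat \<Rightarrow> nat \<Rightarrow> ereal) \<Rightarrow> (nat \<Rightarrow> nat \<Rightarrow> ereal)
    \<Rightarrow> (nat \<Rightarrow> nat \<Rightarrow> ereal) \<Rightarrow> (nat \<Rightarrow> nat) \<Rightarrow> (nat \<Rightarrow> nat) \<Rightarrow> nat set \<Rightarrow> (nat \<Rightarrow> real) \<Rightarrow> bool" where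
  "descent_dir m n p Ap Am C mup mum J x \<longleftrightarrow> J \<subseteq> {..<n} \<and>
     (\<forall>\<delta>. 0 < \<delta> \<and> (\<forall>g\<in>gaps m n p Ap Am C x. 0 < g \<longrightarrow> \<delta> < g) \<longrightarrow>
        feasS m n Ap Am (shiftv x \<delta> J) \<and>
        objf n p C mup mum (shiftv x \<delta> J) < objf n p C mup mum x)"

definition tverts :: "nat \<Rightarrow> nat \<Rightarrow> nat \<Rightarrow> tvert set" where
  "tverts m n p = U ` {..<p} \<union> V ` {..<n} \<union> W ` {..<m}"

definition E1 :: "nat \<Rightarrow> nat \<Rightarrow> (nat \<Rightarrow> nat \<Rightarrow> ereal) \<Rightarrow> (nat \<Rightarrow> real) \<Rightarrow> (tvert \<times> tvert) set" where
  "E1 n p C x = {(U k, V j) | k j. k < p \<and> j < n \<and> rmax n C k x = C k j + ereal (x j)}"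

definition E2 :: "nat \<Rightarrow> nat \<Rightarrow> (nat \<Rightarrow> nat \<Rightarrow> ereal) \<Rightarrow> (nat \<Rightarrow> nat \<Rightarrow> ereal) \<Rightarrow> (nat \<Rightarrow> real) \<Rightarrow> (tvert \<times> tvert) set" where
  "E2 m n Ap Am x = {(W i, V j) | i j. i < m \<and> j < n \<and> rmax n (amat Ap Am) i x = Am i j + ereal (x j)}"

definition E3 :: "nat \<Rightarrow> nat \<Rightarrow> (nat \<Rightarrow> nat \<Rightarrow> ereal) \<Rightarrow> (nat \<Rightarrow> nat \<Rightarrow> ereal) \<Rightarrow> (nat \<Rightarrow> real) \<Rightarrow> (tvert \<times> tvert) set" where
  "E3 m n Ap Am x = {(V j, W i) | i j. i < m \<and> j < n \<and> rmax n (amat Ap Am) i x = Ap i j + ereal (x j)}"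

definition tedges :: "nat \<Rightarrow> nat \<Rightarrow> nat \<Rightarrow> (nat \<Rightarrow> nat \<Rightarrow> ereal) \<Rightarrow> (nat \<Rightarrow> nat \<Rightarrow> ereal)
    \<Rightarrow> (nat \<Rightarrow> nat \<Rightarrow> ereal) \<Rightarrow> (nat \<Rightarrow> real) \<Rightarrow> (tvert \<times> tvert) set" where
  "tedges m n p Ap Am C x = E1 n p C x \<union> E2 m n Ap Am x \<union> E3 m n Ap Am x"

definition Ecirc :: "nat \<Rightarrow> nat \<Rightarrow> nat \<Rightarrow> (nat \<Rightarrow> nat \<Rightarrow> ereal) \<Rightarrow> (nat \<Rightarrow> nat \<Rightarrow> ereal)
    \<Rightarrow> (nat \<Rightarrow> nat \<Rightarrow> ereal) \<Rightarrow> (nat \<Rightarrow> real) \<Rightarrow> (tvert \<times> tvert) set" where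
  "Ecirc m n p Ap Am C x = E1 n p C x \<union> E2 m n Ap Am x \<union>
     {e \<in> E3 m n Ap Am x. card {j. (V j, snd e) \<in> E3 m n Ap Am x} \<ge> 2}"

definition uconn :: "(tvert \<times> tvert) set \<Rightarrow> (tvert \<times> tvert) set" where
  "uconn E = (E \<union> E\<inverse>)\<^sup>*"

definition connected_on :: "tvert set \<Rightarrow> (tvert \<times> tvert) set \<Rightarrow> bool" where
  "connected_on Vs E \<longleftrightarrow> (\<forall>a\<in>Vs. \<forall>b\<in>Vs. (a, b) \<in> uconn E)"

text \<open>The underlying undirected multigraph (V, E) is a spanning tree of Vs:
  connected on Vs, and acyclic (no edge lies on a cycle, i.e. every edge is a bridge).\<close>
definition spanning_tree :: "tvert set \<Rightarrow> (tvert \<times> tvert) set \<Rightarrow> bool" where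
  "spanning_tree Vs E \<longleftrightarrow> E \<subseteq> Vs \<times> Vs \<and> connected_on Vs E \<and>
     (\<forall>e\<in>E. (fst e, snd e) \<notin> uconn (E - {e}))"

definition uw_end :: "tvert \<times> tvert \<Rightarrow> tvert" where
  "uw_end e = (case fst e of V _ \<Rightarrow> snd e | _ \<Rightarrow> fst e)"

text \<open>V(T(e,x)): column vertices of the component of the U/W-endpoint of e after removing e.\<close>
definition subtreeV :: "nat \<Rightarrow> (tvert \<times> tvert) set \<Rightarrow> tvert \<times> tvert \<Rightarrow> nat set" where
  "subtreeV n E e = {j. j < n \<and> (uw_end e, V j) \<in> uconn (E - {e})}"

text \<open>Undirected bipartite support graph of the data (standing assumption: connected).\<close>
definition supp_edges :: "nat \<Rightarrow> nat \<Rightarrow> nat \<Rightarrow> (nat \<Rightarrow> nat \<Rightarrow> ereal) \<Rightarrow> (nat \<Rightarrow> nat \<Rightarrow> ereal)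
    \<Rightarrow> (nat \<Rightarrow> nat \<Rightarrow> ereal) \<Rightarrow> (tvert \<times> tvert) set" where
  "supp_edges m n p Ap Am C =
     {(U k, V j) | k j. k < p \<and> j < n \<and> C k j \<noteq> -\<infinity>} \<union>
     {(W i, V j) | i j. i < m \<and> j < n \<and> amat Ap Am i j \<noteq> -\<infinity>}"

text \<open>Q = C stacked above A: rows 0..<p are C, rows p..<p+m are A.\<close>
definition qmat :: "nat \<Rightarrow> (nat \<Rightarrow> nat \<Rightarrow> ereal) \<Rightarrow> (nat \<Rightarrow> nat \<Rightarrow> ereal)
    \<Rightarrow> (nat \<Rightarrow> nat \<Rightarrow> ereal) \<Rightarrow> nat \<Rightarrow> nat \<Rightarrow> ereal" where
  "qmat p Ap Am C r j = (if r < p then C r j else amat Ap Am (r - p) j)"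

text \<open>Non-degeneracy: for every square submatrix (rows I, columns J) with finite tropical
  determinant, the optimal bijection I \<rightarrow> J is unique.\<close>
definition nondegenerate :: "nat \<Rightarrow> nat \<Rightarrow> nat \<Rightarrow> (nat \<Rightarrow> nat \<Rightarrow> ereal) \<Rightarrow> (nat \<Rightarrow> nat \<Rightarrow> ereal)
    \<Rightarrow> (nat \<Rightarrow> nat \<Rightarrow> ereal) \<Rightarrow> bool" where
  "nondegenerate m n p Ap Am C \<longleftrightarrow>
     (\<forall>I J \<sigma>1 \<sigma>2. I \<subseteq> {..<p + m} \<and> J \<subseteq> {..<n} \<and> bij_betw \<sigma>1 I J \<and> bij_betw \<sigma>2 I J \<and>
        (\<Sum>i\<in>I. qmat p Ap Am C i (\<sigma>1 i)) \<noteq> -\<infinity> \<and>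
        (\<forall>\<tau>. bij_betw \<tau> I J \<longrightarrow> (\<Sum>i\<in>I. qmat p Ap Am C i (\<tau> i)) \<le> (\<Sum>i\<in>I. qmat p Ap Am C i (\<sigma>1 i))) \<and>
        (\<Sum>i\<in>I. qmat p Ap Am C i (\<sigma>2 i)) = (\<Sum>i\<in>I. qmat p Ap Am C i (\<sigma>1 i))
      \<longrightarrow> (\<forall>i\<in>I. \<sigma>1 i = \<sigma>2 i))"

end

theory Submission
  imports Defs
begin

text \<open>Near \<open>x\<close> only the tangent edges matter: for a shift \<open>d\<close> below every positive gap,
  \<open>f(x + d) = f(x) + \<Delta>(d)\<close> with \<open>\<Delta>(d) = \<Sum>\<^sub>k \<mu>\<^sup>+\<^sub>k max\<^bsub>j \<in> N(u\<^sub>k)\<^esub> d\<^sub>j - \<Sum>\<^sub>j \<mu>\<^sup>-\<^sub>j d\<^sub>j\<close>, and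
  \<open>x + d\<close> is feasible iff for every \<open>w\<^sub>i\<close> the maximum of \<open>d\<close> over the neighbours of \<open>w\<^sub>i\<close> is
  attained at an in-neighbour. Give each column vertex the potential \<open>d\<^sub>j\<close> and each vertex of
  \<open>U \<union> W\<close> the maximum of \<open>d\<close> over its neighbours, so that every edge \<open>e\<close> has a nonnegative
  drop \<open>\<lambda>\<^sub>e\<close>. Because \<open>\<G>(x)\<close> is a tree, the potential is recovered from the drops, which gives
  \<open>\<Delta>(d) = \<Sum>\<^sub>e \<lambda>\<^sub>e \<Delta>(\<chi>\<^bsub>V(\<T>(e,x))\<^esub>)\<close>; the constant of integration cancels because
  \<open>\<Sum> \<mu>\<^sup>+ = \<Sum> \<mu>\<^sup>-\<close>. If \<open>x\<close> is not a local optimum, some feasible \<open>d\<close> has \<open>\<Delta>(d) < 0\<close>, hence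
  some edge has \<open>\<lambda>\<^sub>e > 0\<close> and \<open>\<Delta>(\<chi>\<^bsub>V(\<T>(e,x))\<^esub>) < 0\<close>. A positive drop of a feasible \<open>d\<close> puts
  \<open>e\<close> into \<open>E\<^sup>\<circ>(x)\<close>, and for \<open>e \<in> E\<^sup>\<circ>(x)\<close> the direction \<open>\<chi>\<^bsub>V(\<T>(e,x))\<^esub>\<close> is feasible.\<close>

section \<open>Subtrees of a spanning tree\<close>

lemma uconn_sym:
  assumes "(a, b) \<in> uconn E"
  shows "(b, a) \<in> uconn E"
proof -
  have "sym ((E \<union> E\<inverse>)\<^sup>*)" by (rule sym_rtrancl) (auto simp: sym_def)
  with assms show ?thesis unfolding uconn_def by (auto dest: symD)
qed

lemma uconn_trans: "(a, b) \<in> uconn E \<Longrightarrow> (b, c) \<in> uconn E \<Longrightarrow> (a, c) \<in> uconn E"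
  unfolding uconn_def by (rule rtrancl_trans)

lemma uconn_edge: "e \<in> E \<Longrightarrow> (fst e, snd e) \<in> uconn E" "e \<in> E \<Longrightarrow> (snd e, fst e) \<in> uconn E"
  unfolding uconn_def by (cases e; auto)+

lemma uconn_const:
  assumes "\<And>e. e \<in> E \<Longrightarrow> g (fst e) = g (snd e)" and "(a, b) \<in> uconn E"
  shows "g a = g b"
  using assms(2) unfolding uconn_def
proof (induction rule: rtrancl_induct)
  case (step y z)
  then show ?case using assms(1) by force
qed simp

definition other_end :: "tvert \<times> tvert \<Rightarrow> tvert" where
  "other_end e = (if uw_end e = fst e then snd e else fst e)"

definition subtree_verts :: "(tvert \<times> tvert) set \<Rightarrow> tvert \<times> tvert \<Rightarrow> tvert set" where
  "subtree_verts E e = {v. (uw_end e, v) \<in> uconn (E - {e})}"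

lemma subtreeV_eq: "subtreeV n E e = {j. j < n \<and> V j \<in> subtree_verts E e}"
  by (simp add: subtreeV_def subtree_verts_def)

lemma uw_end_cases: "uw_end e = fst e \<or> uw_end e = snd e"
  by (auto simp: uw_end_def split: tvert.splits)

lemma subtree_verts_edge_iff:
  assumes "e' \<in> E" "e' \<noteq> e"
  shows "fst e' \<in> subtree_verts E e \<longleftrightarrow> snd e' \<in> subtree_verts E e"
  using uconn_edge[of e' "E - {e}"] assms uconn_trans[of "uw_end e" _ "E - {e}"]
  unfolding subtree_verts_def by blast

lemma subtree_verts_other_end_iff:
  assumes "e' \<in> E" "e' \<noteq> e"
  shows "other_end e' \<in> subtree_verts E e \<longleftrightarrow> uw_end e' \<in> subtree_verts E e"
  using subtree_verts_edge_iff[OF assms] uw_end_cases[of e'] by (auto simp: other_end_def)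

lemma uw_end_in_subtree_verts: "uw_end e \<in> subtree_verts E e"
  by (simp add: subtree_verts_def uconn_def)

lemma other_end_notin_subtree_verts:
  assumes "spanning_tree Vs E" "e \<in> E"
  shows "other_end e \<notin> subtree_verts E e"
proof
  assume "other_end e \<in> subtree_verts E e"
  then have "(fst e, snd e) \<in> uconn (E - {e}) \<or> (snd e, fst e) \<in> uconn (E - {e})"
    using uw_end_cases[of e] by (auto simp: subtree_verts_def other_end_def split: if_splits)
  then show False using assms uconn_sym by (fastforce simp: spanning_tree_def)
qed

text \<open>On a tree, a potential is recovered up to an additive constant from its drops along the
  edges: summing the drop of each edge over the subtree hanging below it telescopes.\<close>
lemma spanning_tree_potential:
  fixes pot :: "tvert \<Rightarrow> real"
  assumes tree: "spanning_tree Vs E" and fin: "finite E" and "a \<in> Vs" "b \<in> Vs"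
  defines "F v \<equiv> (\<Sum>e\<in>E. (pot (uw_end e) - pot (other_end e)) * of_bool (v \<in> subtree_verts E e))"
  shows "F a - pot a = F b - pot b"
proof -
  have drop: "F (uw_end e') - F (other_end e') = pot (uw_end e') - pot (other_end e')"
    if e': "e' \<in> E" for e'
  proof -
    have "F (uw_end e') - F (other_end e')
        = (\<Sum>e\<in>E. if e = e' then pot (uw_end e) - pot (other_end e) else 0)"
      unfolding F_def sum_subtractf[symmetric]
      using uw_end_in_subtree_verts other_end_notin_subtree_verts[OF tree]
        subtree_verts_other_end_iff[OF e']
      by (intro sum.cong) (auto simp: algebra_simps)
    then show ?thesis using e' fin by simp
  qed
  have "(\<lambda>v. F v - pot v) (fst e) = (\<lambda>v. F v - pot v) (snd e)" if "e \<in> E" for e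
    using drop[OF that] uw_end_cases[of e] by (auto simp: other_end_def split: if_splits)
  moreover have "(a, b) \<in> uconn E"
    using tree assms by (auto simp: spanning_tree_def connected_on_def)
  ultimately show ?thesis by (rule uconn_const)
qed

section \<open>Row maxima\<close>

lemma finite_triple_image:
  fixes a b c :: nat
  shows "finite {f i j k | i j k. i < a \<and> j < b \<and> k < c \<and> P i j k}"
proof -
  have "{f i j k | i j k. i < a \<and> j < b \<and> k < c \<and> P i j k}
      \<subseteq> (\<lambda>(i, j, k). f i j k) ` ({..<a} \<times> {..<b} \<times> {..<c})"
    by force
  then show ?thesis by (rule finite_subset) simp
qed

lemma gaps_finite: "finite (gaps m n p Ap Am C x)"
  unfolding gaps_def by (intro finite_UnI finite_triple_image)

lemma rmax_ge: "j < n \<Longrightarrow> M i j + ereal (y j) \<le> rmax n M i y"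
  unfolding rmax_def by (intro Max_ge) auto

lemma rmax_attained: "0 < n \<Longrightarrow> \<exists>j<n. rmax n M i y = M i j + ereal (y j)"
proof -
  assume "0 < n"
  then have "rmax n M i y \<in> (\<lambda>j. M i j + ereal (y j)) ` {..<n}"
    unfolding rmax_def by (intro Max_in) auto
  then show ?thesis by auto
qed

lemma rmax_le_iff: "0 < n \<Longrightarrow> rmax n M i y \<le> c \<longleftrightarrow> (\<forall>j<n. M i j + ereal (y j) \<le> c)"
  unfolding rmax_def by (subst Max_le_iff) auto

lemma rmax_less_iff: "0 < n \<Longrightarrow> rmax n M i y < c \<longleftrightarrow> (\<forall>j<n. M i j + ereal (y j) < c)"
  unfolding rmax_def by (subst Max_less_iff) auto

lemma rmax_finite:
  assumes "0 < n" "\<forall>j<n. M i j \<noteq> \<infinity>" "\<exists>j<n. M i j \<noteq> -\<infinity>"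
  shows "\<bar>rmax n M i y\<bar> \<noteq> \<infinity>"
proof -
  obtain j0 where "j0 < n" "M i j0 \<noteq> -\<infinity>" using assms by auto
  then have "rmax n M i y \<noteq> -\<infinity>"
    using rmax_ge[of j0 n M i y] by auto
  moreover have "rmax n M i y \<noteq> \<infinity>"
    using rmax_attained[OF assms(1), of M i y] assms(2) by auto
  ultimately show ?thesis by auto
qed

lemma ereal_add_real_assoc: "r + ereal (u + v) = r + ereal u + ereal v"
  by (cases r) auto

lemma ereal_add_real_strict_mono:
  fixes a M :: ereal
  shows "a < M \<Longrightarrow> \<bar>M\<bar> \<noteq> \<infinity> \<Longrightarrow> s \<le> t \<Longrightarrow> a + ereal s < M + ereal t"
  by (cases a; cases M) auto

lemma row_shift_less:
  fixes r :: "nat \<Rightarrow> ereal" and x d :: "nat \<Rightarrow> real"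
  assumes top: "r j0 + ereal (x j0) = M" "\<bar>M\<bar> \<noteq> \<infinity>" and fin: "r j \<noteq> \<infinity>"
    and below: "r j + ereal (x j) < M"
    and gap: "r j \<noteq> -\<infinity> \<Longrightarrow>
      d j - d j0 < \<bar>(real_of_ereal (r j0) + x j0) - (real_of_ereal (r j) + x j)\<bar>"
  shows "r j + ereal (x j + d j) < M + ereal (d j0)"
proof (cases "r j = -\<infinity>")
  case False
  obtain a b where "r j = ereal a" "r j0 = ereal b"
    using False fin top by (cases "r j"; cases "r j0") auto
  then show ?thesis using gap[OF False] top below by auto
qed (use top in auto)

section \<open>First-order analysis at a point with a tangent tree\<close>

locale tangent_tree =
  fixes m n p :: nat
    and Ap Am C :: "nat \<Rightarrow> nat \<Rightarrow> ereal"
    and mup mum :: "nat \<Rightarrow> nat"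
    and x :: "nat \<Rightarrow> real"
  assumes noinfA: "\<forall>i<m. \<forall>j<n. Ap i j \<noteq> \<infinity> \<and> Am i j \<noteq> \<infinity>"
    and noinfC: "\<forall>k<p. \<forall>j<n. C k j \<noteq> \<infinity>"
    and rowA: "\<forall>i<m. \<exists>j<n. amat Ap Am i j \<noteq> -\<infinity>"
    and rowC: "\<forall>k<p. \<exists>j<n. C k j \<noteq> -\<infinity>"
    and balance: "(\<Sum>k<p. mup k) = (\<Sum>j<n. mum j)"
    and feas: "feasS m n Ap Am x"
    and tree: "spanning_tree (tverts m n p) (tedges m n p Ap Am C x)"
    and n_pos: "0 < n"
begin

abbreviation "E \<equiv> tedges m n p Ap Am C x"
abbreviation "A \<equiv> amat Ap Am"
abbreviation "Amax i \<equiv> rmax n A i x"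
abbreviation "Cmax k \<equiv> rmax n C k x"

lemma tedges_U: "(U k, V j) \<in> E \<longleftrightarrow> k < p \<and> j < n \<and> Cmax k = C k j + ereal (x j)"
  and tedges_W_V: "(W i, V j) \<in> E \<longleftrightarrow> i < m \<and> j < n \<and> Amax i = Am i j + ereal (x j)"
  and tedges_V_W: "(V j, W i) \<in> E \<longleftrightarrow> i < m \<and> j < n \<and> Amax i = Ap i j + ereal (x j)"
  and tedges_V_U: "(V j, U k) \<notin> E"
  by (simp_all add: tedges_def E1_def E2_def E3_def)

lemma tedges_cases:
  assumes "e \<in> E"
  obtains (U) k j where "e = (U k, V j)" "(U k, V j) \<in> E"
  | (W_V) i j where "e = (W i, V j)" "(W i, V j) \<in> E"
  | (V_W) i j where "e = (V j, W i)" "(V j, W i) \<in> E"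
  using assms by (auto simp: tedges_def E1_def E2_def E3_def)

lemma finite_tedges: "finite E"
proof -
  have "E \<subseteq> tverts m n p \<times> tverts m n p" using tree by (simp add: spanning_tree_def)
  then show ?thesis by (rule finite_subset) (simp add: tverts_def)
qed

lemma A_ge: "Ap i j \<le> A i j" "Am i j \<le> A i j"
  by (simp_all add: amat_def)

lemma A_cases: "A i j = Ap i j \<or> A i j = Am i j"
  by (auto simp: amat_def max_def)

lemma A_noinf: "i < m \<Longrightarrow> j < n \<Longrightarrow> A i j \<noteq> \<infinity>"
  using noinfA A_cases[of i j] by metis

lemma Amax_finite: "i < m \<Longrightarrow> \<bar>Amax i\<bar> \<noteq> \<infinity>"
  using A_noinf rowA n_pos by (intro rmax_finite) auto

lemma Cmax_finite: "k < p \<Longrightarrow> \<bar>Cmax k\<bar> \<noteq> \<infinity>"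
  using noinfC rowC n_pos by (intro rmax_finite) auto

definition nbrs :: "tvert \<Rightarrow> nat set" where
  "nbrs z = {j. (z, V j) \<in> E \<or> (V j, z) \<in> E}"

definition in_nbrs :: "nat \<Rightarrow> nat set" where
  "in_nbrs i = {j. (V j, W i) \<in> E}"

lemma nbrs_U: "j \<in> nbrs (U k) \<longleftrightarrow> k < p \<and> j < n \<and> Cmax k = C k j + ereal (x j)"
  by (simp add: nbrs_def tedges_U tedges_V_U)

lemma nbrs_W: "j \<in> nbrs (W i) \<longleftrightarrow> i < m \<and> j < n \<and> Amax i = A i j + ereal (x j)"
proof
  assume "j \<in> nbrs (W i)"
  then have ij: "i < m" "j < n"
    and "Amax i = Ap i j + ereal (x j) \<or> Amax i = Am i j + ereal (x j)"
    unfolding nbrs_def tedges_W_V tedges_V_W by auto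
  moreover have "Ap i j + ereal (x j) \<le> A i j + ereal (x j)" "Am i j + ereal (x j) \<le> A i j + ereal (x j)"
    using A_ge by (auto intro: add_right_mono)
  moreover have "A i j + ereal (x j) \<le> Amax i" using rmax_ge ij(2) .
  ultimately show "i < m \<and> j < n \<and> Amax i = A i j + ereal (x j)" by auto
next
  assume "i < m \<and> j < n \<and> Amax i = A i j + ereal (x j)"
  then show "j \<in> nbrs (W i)"
    using A_cases[of i j] unfolding nbrs_def tedges_W_V tedges_V_W by auto
qed

lemma nbrs_subset: "nbrs z \<subseteq> {..<n}"
  by (auto simp: nbrs_def tedges_def E1_def E2_def E3_def)

lemma finite_nbrs: "finite (nbrs z)"
  using nbrs_subset by (rule finite_subset) simp

lemma nbrs_U_nonempty: "k < p \<Longrightarrow> nbrs (U k) \<noteq> {}"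
  using rmax_attained[OF n_pos, of C k x] by (auto simp: nbrs_U)

lemma nbrs_W_nonempty: "i < m \<Longrightarrow> nbrs (W i) \<noteq> {}"
  using rmax_attained[OF n_pos, of A i x] by (auto simp: nbrs_W)

lemma in_nbrs_subset: "in_nbrs i \<subseteq> nbrs (W i)"
  by (auto simp: in_nbrs_def nbrs_def)

lemma in_nbrs_nonempty:
  assumes i: "i < m"
  shows "in_nbrs i \<noteq> {}"
proof -
  obtain j where j: "j < n" "rmax n Ap i x = Ap i j + ereal (x j)"
    using rmax_attained[OF n_pos] by blast
  have "A i j' + ereal (x j') \<le> Ap i j + ereal (x j)" if "j' < n" for j'
    using A_cases[of i j'] rmax_ge[OF that, of Ap i x] rmax_ge[OF that, of Am i x] feas i j(2)
    by (auto simp: feasS_def)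
  then have "Amax i \<le> Ap i j + ereal (x j)" by (simp add: rmax_le_iff[OF n_pos])
  moreover have "Ap i j + ereal (x j) \<le> Amax i"
    using rmax_ge[OF j(1), of A i x] A_ge(1)[of i j] by (meson add_right_mono order_trans)
  ultimately show ?thesis using i j by (auto simp: in_nbrs_def tedges_V_W)
qed

definition nbr_max :: "(nat \<Rightarrow> real) \<Rightarrow> tvert \<Rightarrow> real" where
  "nbr_max d z = Max (d ` nbrs z)"

lemma nbr_max_ge: "j \<in> nbrs z \<Longrightarrow> d j \<le> nbr_max d z"
  unfolding nbr_max_def using finite_nbrs by (intro Max_ge) auto

lemma nbr_max_attained: "nbrs z \<noteq> {} \<Longrightarrow> \<exists>j\<in>nbrs z. d j = nbr_max d z"
proof -
  assume "nbrs z \<noteq> {}"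
  then have "nbr_max d z \<in> d ` nbrs z"
    unfolding nbr_max_def using finite_nbrs by (intro Max_in) auto
  then show ?thesis by auto
qed

text \<open>The condition \<open>\<delta> < \<epsilon>(x)\<close>: under such a shift no entry that is not maximal in its row can
  overtake a maximal one.\<close>
definition small_shift :: "(nat \<Rightarrow> real) \<Rightarrow> bool" where
  "small_shift d \<longleftrightarrow> (\<forall>g\<in>gaps m n p Ap Am C x. 0 < g \<longrightarrow> (\<forall>j<n. \<forall>j'<n. d j - d j' < g))"

lemma C_shift_nbr: "j \<in> nbrs (U k) \<Longrightarrow> C k j + ereal (x j + t) = Cmax k + ereal t"
  by (simp add: nbrs_U ereal_add_real_assoc)

lemma A_shift_nbr: "j \<in> nbrs (W i) \<Longrightarrow> A i j + ereal (x j + t) = Amax i + ereal t"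
  by (simp add: nbrs_W ereal_add_real_assoc)

lemma C_shift_less:
  assumes d: "small_shift d" and j: "j < n" "j \<notin> nbrs (U k)" and j0: "j0 \<in> nbrs (U k)"
  shows "C k j + ereal (x j + d j) < Cmax k + ereal (d j0)"
proof (rule row_shift_less)
  have k: "k < p" and j0n: "j0 < n" and top: "C k j0 + ereal (x j0) = Cmax k"
    using j0 by (auto simp: nbrs_U)
  show "C k j0 + ereal (x j0) = Cmax k" "\<bar>Cmax k\<bar> \<noteq> \<infinity>" "C k j \<noteq> \<infinity>"
    using top Cmax_finite[OF k] noinfC k j by auto
  show below: "C k j + ereal (x j) < Cmax k"
    using rmax_ge[OF j(1), of C k x] j k by (auto simp: nbrs_U)
  show "d j - d j0 < \<bar>(real_of_ereal (C k j0) + x j0) - (real_of_ereal (C k j) + x j)\<bar>"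
    if fin: "C k j \<noteq> -\<infinity>"
  proof -
    have "C k j0 \<noteq> -\<infinity>" using top Cmax_finite[OF k] by auto
    then have "\<bar>(real_of_ereal (C k j0) + x j0) - (real_of_ereal (C k j) + x j)\<bar> \<in> gaps m n p Ap Am C x"
      unfolding gaps_def using k j j0n fin by blast
    moreover have "real_of_ereal (C k j0) + x j0 \<noteq> real_of_ereal (C k j) + x j"
      using top below noinfC k j j0n fin \<open>C k j0 \<noteq> -\<infinity>\<close> by (cases "C k j"; cases "C k j0") auto
    ultimately show ?thesis using d j j0n by (auto simp: small_shift_def)
  qed
qed

lemma A_shift_less:
  assumes d: "small_shift d" and j: "j < n" "j \<notin> nbrs (W i)" and j0: "j0 \<in> nbrs (W i)"
  shows "A i j + ereal (x j + d j) < Amax i + ereal (d j0)"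
proof (rule row_shift_less)
  have i: "i < m" and j0n: "j0 < n" and top: "A i j0 + ereal (x j0) = Amax i"
    using j0 by (auto simp: nbrs_W)
  show "A i j0 + ereal (x j0) = Amax i" "\<bar>Amax i\<bar> \<noteq> \<infinity>" "A i j \<noteq> \<infinity>"
    using top Amax_finite[OF i] A_noinf i j by auto
  show below: "A i j + ereal (x j) < Amax i"
    using rmax_ge[OF j(1), of A i x] j i by (auto simp: nbrs_W)
  show "d j - d j0 < \<bar>(real_of_ereal (A i j0) + x j0) - (real_of_ereal (A i j) + x j)\<bar>"
    if fin: "A i j \<noteq> -\<infinity>"
  proof -
    have "A i j0 \<noteq> -\<infinity>" using top Amax_finite[OF i] by auto
    then have "\<bar>(real_of_ereal (A i j0) + x j0) - (real_of_ereal (A i j) + x j)\<bar> \<in> gaps m n p Ap Am C x"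
      unfolding gaps_def using i j j0n fin by blast
    moreover have "real_of_ereal (A i j0) + x j0 \<noteq> real_of_ereal (A i j) + x j"
      using top below A_noinf i j j0n fin \<open>A i j0 \<noteq> -\<infinity>\<close> by (cases "A i j"; cases "A i j0") auto
    ultimately show ?thesis using d j j0n by (auto simp: small_shift_def)
  qed
qed

definition obj_change :: "(nat \<Rightarrow> real) \<Rightarrow> real" where
  "obj_change d = (\<Sum>k<p. real (mup k) * nbr_max d (U k)) - (\<Sum>j<n. real (mum j) * d j)"

lemma rmax_C_shift:
  assumes d: "small_shift d" and k: "k < p"
  shows "rmax n C k (\<lambda>j. x j + d j) = Cmax k + ereal (nbr_max d (U k))"
proof (rule antisym)
  obtain j0 where j0: "j0 \<in> nbrs (U k)" "d j0 = nbr_max d (U k)"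
    using nbr_max_attained nbrs_U_nonempty[OF k] by blast
  have "C k j + ereal (x j + d j) \<le> Cmax k + ereal (d j0)" if j: "j < n" for j
  proof (cases "j \<in> nbrs (U k)")
    case True
    then show ?thesis
      using C_shift_nbr[OF True] nbr_max_ge[OF True, of d] j0(2) by (auto intro!: add_left_mono)
  qed (use C_shift_less[OF d j _ j0(1)] in auto)
  then show "rmax n C k (\<lambda>j. x j + d j) \<le> Cmax k + ereal (nbr_max d (U k))"
    using j0(2) by (simp add: rmax_le_iff[OF n_pos])
  show "Cmax k + ereal (nbr_max d (U k)) \<le> rmax n C k (\<lambda>j. x j + d j)"
  proof -
    have "j0 < n" using j0(1) nbrs_subset by blast
    then have "C k j0 + ereal (x j0 + d j0) \<le> rmax n C k (\<lambda>j. x j + d j)"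
      using rmax_ge[of j0 n C k "\<lambda>j. x j + d j"] by simp
    then show ?thesis using C_shift_nbr[OF j0(1)] j0(2) by simp
  qed
qed

lemma objf_shift:
  assumes d: "small_shift d"
  shows "objf n p C mup mum (\<lambda>j. x j + d j) = objf n p C mup mum x + obj_change d"
proof -
  have "real_of_ereal (rmax n C k (\<lambda>j. x j + d j)) = real_of_ereal (Cmax k) + nbr_max d (U k)"
    if "k < p" for k
    using rmax_C_shift[OF d that] Cmax_finite[OF that] by (cases "Cmax k") auto
  then have "(\<Sum>k<p. real (mup k) * real_of_ereal (rmax n C k (\<lambda>j. x j + d j)))
      = (\<Sum>k<p. real (mup k) * real_of_ereal (Cmax k)) + (\<Sum>k<p. real (mup k) * nbr_max d (U k))"
    by (simp add: sum.distrib[symmetric] distrib_left)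
  then show ?thesis
    unfolding objf_def obj_change_def by (simp add: algebra_simps sum.distrib)
qed

definition tangent_feasible :: "(nat \<Rightarrow> real) \<Rightarrow> bool" where
  "tangent_feasible d \<longleftrightarrow> (\<forall>i<m. \<exists>js\<in>in_nbrs i. \<forall>j\<in>nbrs (W i). d j \<le> d js)"

lemma in_nbrs_shift: "j \<in> in_nbrs i \<Longrightarrow> Ap i j + ereal (x j + t) = Amax i + ereal t"
  by (simp add: in_nbrs_def tedges_V_W ereal_add_real_assoc)

lemma feasS_shift_if_tangent_feasible:
  assumes d: "small_shift d" and feasible: "tangent_feasible d"
  shows "feasS m n Ap Am (\<lambda>j. x j + d j)"
  unfolding feasS_def
proof (intro allI impI)
  fix i assume i: "i < m"
  obtain js where js: "js \<in> in_nbrs i" "\<forall>j\<in>nbrs (W i). d j \<le> d js"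
    using feasible i by (auto simp: tangent_feasible_def)
  then have js_nbr: "js \<in> nbrs (W i)" using in_nbrs_subset by blast
  have "Am i j + ereal (x j + d j) \<le> Amax i + ereal (d js)" if j: "j < n" for j
  proof -
    have "Am i j + ereal (x j + d j) \<le> A i j + ereal (x j + d j)"
      using A_ge(2) by (rule add_right_mono)
    also have "\<dots> \<le> Amax i + ereal (d js)"
      using A_shift_nbr js(2) A_shift_less[OF d j _ js_nbr]
      by (cases "j \<in> nbrs (W i)") (auto intro: less_imp_le intro!: add_left_mono)
    finally show ?thesis .
  qed
  then have "rmax n Am i (\<lambda>j. x j + d j) \<le> Amax i + ereal (d js)"
    by (simp add: rmax_le_iff[OF n_pos])
  also have "\<dots> = Ap i js + ereal (x js + d js)" using in_nbrs_shift[OF js(1)] by simp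
  also have "\<dots> \<le> rmax n Ap i (\<lambda>j. x j + d j)"
    using rmax_ge[of js n Ap i "\<lambda>j. x j + d j"] js_nbr nbrs_subset by auto
  finally show "rmax n Am i (\<lambda>j. x j + d j) \<le> rmax n Ap i (\<lambda>j. x j + d j)" .
qed

lemma Ap_shift_less:
  assumes d: "small_shift d" and i: "i < m"
    and jm: "jm \<in> nbrs (W i)" "d jm = nbr_max d (W i)"
    and strict: "\<And>j. j \<in> in_nbrs i \<Longrightarrow> d j < d jm"
  shows "rmax n Ap i (\<lambda>j. x j + d j) < Amax i + ereal (d jm)"
  unfolding rmax_less_iff[OF n_pos]
proof (intro allI impI)
  fix j assume j: "j < n"
  show "Ap i j + ereal (x j + d j) < Amax i + ereal (d jm)"
  proof (cases "j \<in> nbrs (W i)")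
    case True
    show ?thesis
    proof (cases "j \<in> in_nbrs i")
      case True
      then show ?thesis using in_nbrs_shift strict Amax_finite[OF i] by (cases "Amax i") auto
    next
      case False
      have "Ap i j + ereal (x j) \<le> Amax i"
        using A_ge(1) rmax_ge[OF j, of A i x] by (meson add_right_mono order_trans)
      then have "Ap i j + ereal (x j) < Amax i"
        using False i j by (auto simp: in_nbrs_def tedges_V_W)
      then show ?thesis
        using ereal_add_real_strict_mono Amax_finite[OF i] nbr_max_ge[OF True] jm(2)
        by (simp add: ereal_add_real_assoc)
    qed
  next
    case False
    have "Ap i j + ereal (x j + d j) \<le> A i j + ereal (x j + d j)"
      using A_ge(1) by (rule add_right_mono)
    then show ?thesis using A_shift_less[OF d j False jm(1)] by simp
  qed
qed

text \<open>If no in-neighbour of \<open>w\<^sub>i\<close> maximises \<open>d\<close> over the neighbours of \<open>w\<^sub>i\<close>, a maximiser is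
  joined to \<open>w\<^sub>i\<close> through \<open>A\<^sup>-\<close>, and then \<open>A\<^sup>-\<close> overtakes \<open>A\<^sup>+\<close> in row \<open>i\<close>.\<close>
lemma tangent_feasible_if_feasS_shift:
  assumes d: "small_shift d" and feasible: "feasS m n Ap Am (\<lambda>j. x j + d j)"
  shows "tangent_feasible d"
  unfolding tangent_feasible_def
proof (intro allI impI, rule ccontr)
  fix i assume i: "i < m" and no_max: "\<not> (\<exists>js\<in>in_nbrs i. \<forall>j\<in>nbrs (W i). d j \<le> d js)"
  obtain jm where jm: "jm \<in> nbrs (W i)" "d jm = nbr_max d (W i)"
    using nbr_max_attained nbrs_W_nonempty[OF i] by blast
  have strict: "d j < d jm" if j: "j \<in> in_nbrs i" for j
  proof (rule ccontr)
    assume "\<not> d j < d jm"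
    then have "d j' \<le> d j" if "j' \<in> nbrs (W i)" for j'
      using nbr_max_ge[OF that, of d] jm(2) by simp
    then show False using j no_max by blast
  qed
  then have "jm \<notin> in_nbrs i" by blast
  then have jm_minus: "jm < n" "Am i jm + ereal (x jm) = Amax i"
    using jm(1) by (auto simp: nbrs_def in_nbrs_def tedges_W_V)
  have "rmax n Ap i (\<lambda>j. x j + d j) < Amax i + ereal (d jm)"
    using Ap_shift_less[OF d i jm strict] .
  also have "\<dots> \<le> rmax n Am i (\<lambda>j. x j + d j)"
    using rmax_ge[of jm n Am i "\<lambda>j. x j + d j"] jm_minus by (simp add: ereal_add_real_assoc)
  finally show False using feasible i unfolding feasS_def by (meson leD)
qed

lemma feasS_shift_iff:
  "small_shift d \<Longrightarrow> feasS m n Ap Am (\<lambda>j. x j + d j) \<longleftrightarrow> tangent_feasible d"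
  using feasS_shift_if_tangent_feasible tangent_feasible_if_feasS_shift by blast

definition potential :: "(nat \<Rightarrow> real) \<Rightarrow> tvert \<Rightarrow> real" where
  "potential d v = (case v of V j \<Rightarrow> d j | _ \<Rightarrow> nbr_max d v)"

definition edge_drop :: "(nat \<Rightarrow> real) \<Rightarrow> tvert \<times> tvert \<Rightarrow> real" where
  "edge_drop d e = potential d (uw_end e) - potential d (other_end e)"

definition chi :: "nat set \<Rightarrow> nat \<Rightarrow> real" where
  "chi T j = of_bool (j \<in> T)"

lemma tedges_ends:
  assumes "e \<in> E"
  obtains j where "other_end e = V j" "j \<in> nbrs (uw_end e)" "potential d (uw_end e) = nbr_max d (uw_end e)"
  using assms
  by (cases rule: tedges_cases)
     (auto simp: other_end_def uw_end_def potential_def nbrs_def)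

lemma edge_drop_nonneg: "e \<in> E \<Longrightarrow> 0 \<le> edge_drop d e"
  by (elim tedges_ends[where d = d]) (simp add: edge_drop_def potential_def nbr_max_ge)

lemma nbr_max_chi_subtree:
  assumes j1: "j1 \<in> nbrs (U k)" "e \<noteq> (U k, V j1)"
  shows "nbr_max (chi (subtreeV n E e)) (U k) = of_bool (U k \<in> subtree_verts E e)"
  unfolding nbr_max_def
proof (rule Max_eqI)
  have same_side: "chi (subtreeV n E e) j = of_bool (U k \<in> subtree_verts E e)"
    if j: "j \<in> nbrs (U k)" "e \<noteq> (U k, V j)" for j
  proof -
    have "(U k, V j) \<in> E" using j(1) by (simp add: nbrs_def tedges_V_U)
    from subtree_verts_edge_iff[OF this j(2)[symmetric]]
    have "V j \<in> subtree_verts E e \<longleftrightarrow> U k \<in> subtree_verts E e" by simp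
    moreover have "j < n" using j(1) nbrs_subset by blast
    ultimately show ?thesis by (simp add: chi_def subtreeV_eq)
  qed
  show "y \<le> of_bool (U k \<in> subtree_verts E e)" if y: "y \<in> chi (subtreeV n E e) ` nbrs (U k)" for y
  proof -
    obtain j where j: "j \<in> nbrs (U k)" "y = chi (subtreeV n E e) j" using y by blast
    show ?thesis
    proof (cases "e = (U k, V j)")
      case True
      then have "U k \<in> subtree_verts E e"
        using uw_end_in_subtree_verts[of e E] by (simp add: uw_end_def)
      then show ?thesis using j(2) by (simp add: chi_def)
    qed (use same_side j in simp)
  qed
  show "of_bool (U k \<in> subtree_verts E e) \<in> chi (subtreeV n E e) ` nbrs (U k)"
    using same_side[OF j1] j1(1) by (metis image_eqI)
qed (simp add: finite_nbrs)

text \<open>If \<open>e\<close> is the only edge at \<open>U k\<close>, the two sides differ but the drop along \<open>e\<close> is zero.\<close>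
lemma edge_drop_mult_nbr_max_chi:
  assumes k: "k < p"
  shows "edge_drop d e * nbr_max (chi (subtreeV n E e)) (U k)
       = edge_drop d e * of_bool (U k \<in> subtree_verts E e)"
proof (cases "\<exists>j1\<in>nbrs (U k). e \<noteq> (U k, V j1)")
  case True
  then obtain j1 where "j1 \<in> nbrs (U k)" "e \<noteq> (U k, V j1)" by blast
  then show ?thesis using nbr_max_chi_subtree by simp
next
  case False
  obtain j0 where j0: "j0 \<in> nbrs (U k)" using nbrs_U_nonempty[OF k] by blast
  with False have e_eq: "e = (U k, V j0)" by blast
  have "j = j0" if "j \<in> nbrs (U k)" for j
  proof -
    from False that have "e = (U k, V j)" by blast
    with e_eq show "j = j0" by simp
  qed
  with j0 have "nbrs (U k) = {j0}" by blast
  then have "edge_drop d e = 0"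
    by (simp add: e_eq edge_drop_def potential_def nbr_max_def uw_end_def other_end_def)
  then show ?thesis by simp
qed

lemma edge_drop_mult_obj_change_chi:
  "edge_drop d e * obj_change (chi (subtreeV n E e))
    = (\<Sum>k<p. real (mup k) * (edge_drop d e * of_bool (U k \<in> subtree_verts E e)))
      - (\<Sum>j<n. real (mum j) * (edge_drop d e * of_bool (V j \<in> subtree_verts E e)))"
proof -
  have "edge_drop d e * obj_change (chi (subtreeV n E e))
    = (\<Sum>k<p. real (mup k) * (edge_drop d e * nbr_max (chi (subtreeV n E e)) (U k)))
      - (\<Sum>j<n. real (mum j) * (edge_drop d e * chi (subtreeV n E e) j))"
    unfolding obj_change_def by (simp add: right_diff_distrib sum_distrib_left mult.left_commute)
  also have "\<dots> = (\<Sum>k<p. real (mup k) * (edge_drop d e * of_bool (U k \<in> subtree_verts E e)))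
      - (\<Sum>j<n. real (mum j) * (edge_drop d e * of_bool (V j \<in> subtree_verts E e)))"
    using edge_drop_mult_nbr_max_chi
    by (intro arg_cong2[where f = minus] sum.cong refl) (simp_all add: chi_def subtreeV_eq)
  finally show ?thesis .
qed

lemma obj_change_tree_decomposition:
  "obj_change d = (\<Sum>e\<in>E. edge_drop d e * obj_change (chi (subtreeV n E e)))"
proof -
  define F where "F v = (\<Sum>e\<in>E. edge_drop d e * of_bool (v \<in> subtree_verts E e))" for v
  define c where "c = F (V 0) - potential d (V 0)"
  have F: "F v = potential d v + c" if "v \<in> tverts m n p" for v
    using spanning_tree_potential[OF tree finite_tedges that, of "V 0" "potential d"] n_pos
    by (simp add: F_def c_def edge_drop_def tverts_def)
  have "(\<Sum>e\<in>E. edge_drop d e * obj_change (chi (subtreeV n E e)))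
      = (\<Sum>e\<in>E. (\<Sum>k<p. real (mup k) * (edge_drop d e * of_bool (U k \<in> subtree_verts E e)))
               - (\<Sum>j<n. real (mum j) * (edge_drop d e * of_bool (V j \<in> subtree_verts E e))))"
    by (simp only: edge_drop_mult_obj_change_chi)
  also have "\<dots> = (\<Sum>k<p. real (mup k) * F (U k)) - (\<Sum>j<n. real (mum j) * F (V j))"
    unfolding F_def sum_subtractf sum_distrib_left by (simp only: sum.swap[of _ E])
  also have "\<dots> = (\<Sum>k<p. real (mup k) * (nbr_max d (U k) + c)) - (\<Sum>j<n. real (mum j) * (d j + c))"
    using F by (simp add: tverts_def potential_def)
  also have "\<dots> = obj_change d + c * ((\<Sum>k<p. real (mup k)) - (\<Sum>j<n. real (mum j)))"
    unfolding obj_change_def by (simp add: algebra_simps sum.distrib sum_distrib_left sum_distrib_right)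
  also have "(\<Sum>k<p. real (mup k)) = (\<Sum>j<n. real (mum j))"
    using balance by (metis of_nat_sum)
  finally show ?thesis by simp
qed

lemma Ecirc_iff:
  "e \<in> Ecirc m n p Ap Am C x \<longleftrightarrow> e \<in> E \<and> (\<forall>i j. e = (V j, W i) \<longrightarrow> 2 \<le> card (in_nbrs i))"
proof -
  have E3_in_nbrs: "{j'. (V j', W i) \<in> E3 m n Ap Am x} = in_nbrs i" for i
    by (auto simp: in_nbrs_def tedges_def E1_def E2_def)
  have "e \<in> E1 n p C x \<Longrightarrow> \<exists>k j. e = (U k, V j)" "e \<in> E2 m n Ap Am x \<Longrightarrow> \<exists>i j. e = (W i, V j)"
    "e \<in> E3 m n Ap Am x \<Longrightarrow> \<exists>i j. e = (V j, W i)"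
    by (auto simp: E1_def E2_def E3_def)
  then show ?thesis
    unfolding Ecirc_def tedges_def by (auto simp: E3_in_nbrs)
qed

lemma two_in_nbrs:
  assumes "(V j0, W i) \<in> Ecirc m n p Ap Am C x"
  obtains j1 where "j1 \<in> in_nbrs i" "j1 \<noteq> j0"
proof -
  have "2 \<le> card (in_nbrs i)" using assms by (simp add: Ecirc_iff)
  then have "\<not> in_nbrs i \<subseteq> {j0}" using card_mono[of "{j0}" "in_nbrs i"] by auto
  then show ?thesis using that by blast
qed

lemma Ecirc_if_edge_drop_pos:
  assumes e: "e \<in> E" and drop: "0 < edge_drop d e" and feasible: "tangent_feasible d"
  shows "e \<in> Ecirc m n p Ap Am C x"
proof -
  have "2 \<le> card (in_nbrs i)" if e_eq: "e = (V j, W i)" for i j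
  proof -
    have i: "i < m" and j: "j \<in> in_nbrs i" using e e_eq by (auto simp: in_nbrs_def tedges_V_W)
    have "d j < nbr_max d (W i)"
      using drop e_eq by (simp add: edge_drop_def potential_def uw_end_def other_end_def)
    moreover obtain js where js: "js \<in> in_nbrs i" "\<forall>j'\<in>nbrs (W i). d j' \<le> d js"
      using feasible i by (auto simp: tangent_feasible_def)
    moreover have "nbr_max d (W i) \<le> d js"
      using js(2) nbr_max_attained[OF nbrs_W_nonempty[OF i], of d] by auto
    ultimately have "{j, js} \<subseteq> in_nbrs i" "j \<noteq> js" using j by auto
    moreover have "finite (in_nbrs i)"
      using in_nbrs_subset finite_nbrs by (rule finite_subset)
    ultimately show ?thesis using card_mono[of "in_nbrs i" "{j, js}"] by auto
  qed
  then show ?thesis using e by (simp add: Ecirc_iff)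
qed

lemma nbrs_outside_subtree:
  assumes out: "W i \<notin> subtree_verts E e" and j: "j \<in> nbrs (W i)"
  shows "V j \<notin> subtree_verts E e"
proof -
  have incident: "e' \<noteq> e" if "e' = (W i, V j) \<or> e' = (V j, W i)" for e'
    using that out uw_end_in_subtree_verts[of e E] by (auto simp: uw_end_def)
  from j have "(W i, V j) \<in> E \<or> (V j, W i) \<in> E" by (simp add: nbrs_def)
  then show ?thesis
  proof
    assume "(W i, V j) \<in> E"
    from subtree_verts_edge_iff[OF this incident] out show ?thesis by simp
  next
    assume "(V j, W i) \<in> E"
    from subtree_verts_edge_iff[OF this incident] out show ?thesis by simp
  qed
qed

lemma in_nbr_in_subtree:
  assumes e: "e \<in> Ecirc m n p Ap Am C x" and i: "i < m" and inside: "W i \<in> subtree_verts E e"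
  obtains js where "js \<in> in_nbrs i" "V js \<in> subtree_verts E e"
proof -
  obtain j1 where j1: "j1 \<in> in_nbrs i" "(V j1, W i) \<noteq> e"
  proof (cases "\<exists>j0. e = (V j0, W i)")
    case True
    then obtain j0 where "e = (V j0, W i)" by blast
    with e show ?thesis using that two_in_nbrs by blast
  next
    case False
    then show ?thesis using that in_nbrs_nonempty[OF i] by blast
  qed
  then have "(V j1, W i) \<in> E" by (simp add: in_nbrs_def)
  from subtree_verts_edge_iff[OF this j1(2)] inside have "V j1 \<in> subtree_verts E e" by simp
  with j1(1) show ?thesis by (rule that)
qed

lemma tangent_feasible_chi_subtree:
  assumes e: "e \<in> Ecirc m n p Ap Am C x"
  shows "tangent_feasible (chi (subtreeV n E e))"
  unfolding tangent_feasible_def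
proof (intro allI impI)
  fix i assume i: "i < m"
  let ?chi = "chi (subtreeV n E e)"
  show "\<exists>js\<in>in_nbrs i. \<forall>j\<in>nbrs (W i). ?chi j \<le> ?chi js"
  proof (cases "W i \<in> subtree_verts E e")
    case True
    then obtain js where js: "js \<in> in_nbrs i" "V js \<in> subtree_verts E e"
      using in_nbr_in_subtree[OF e i] by blast
    then have "?chi js = 1"
      using in_nbrs_subset nbrs_subset by (force simp: chi_def subtreeV_eq)
    then show ?thesis using js(1) by (auto simp: chi_def)
  next
    case False
    have "?chi j = 0" if "j \<in> nbrs (W i)" for j
      using nbrs_outside_subtree[OF False that] by (simp add: chi_def subtreeV_eq)
    then show ?thesis using in_nbrs_nonempty[OF i] in_nbrs_subset by fastforce
  qed
qed

lemma tangent_feasible_scale: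
  "tangent_feasible f \<Longrightarrow> 0 \<le> c \<Longrightarrow> tangent_feasible (\<lambda>j. c * f j)"
  unfolding tangent_feasible_def by (meson mult_left_mono)

lemma nbr_max_scale:
  assumes "nbrs z \<noteq> {}" "0 \<le> c"
  shows "nbr_max (\<lambda>j. c * f j) z = c * nbr_max f z"
proof -
  have "mono ((*) c)" using assms(2) by (simp add: monoI mult_left_mono)
  then show ?thesis
    unfolding nbr_max_def using mono_Max_commute[of "(*) c" "f ` nbrs z"] finite_nbrs assms(1)
    by (simp add: image_image)
qed

lemma obj_change_scale: "0 \<le> c \<Longrightarrow> obj_change (\<lambda>j. c * f j) = c * obj_change f"
  unfolding obj_change_def
  by (simp add: nbr_max_scale nbrs_U_nonempty sum_distrib_left right_diff_distrib algebra_simps)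

lemma small_shift_scaled_chi:
  assumes "0 < \<delta>" "\<forall>g\<in>gaps m n p Ap Am C x. 0 < g \<longrightarrow> \<delta> < g"
  shows "small_shift (\<lambda>j. \<delta> * chi T j)"
  using assms by (auto simp: small_shift_def chi_def)

lemma descent_dir_subtree:
  assumes e: "e \<in> Ecirc m n p Ap Am C x" and neg: "obj_change (chi (subtreeV n E e)) < 0"
  shows "descent_dir m n p Ap Am C mup mum (subtreeV n E e) x"
  unfolding descent_dir_def
proof (intro conjI allI impI)
  show "subtreeV n E e \<subseteq> {..<n}" by (auto simp: subtreeV_def)
  fix \<delta> assume \<delta>: "0 < \<delta> \<and> (\<forall>g\<in>gaps m n p Ap Am C x. 0 < g \<longrightarrow> \<delta> < g)"
  define d where "d j = \<delta> * chi (subtreeV n E e) j" for j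
  have shift: "shiftv x \<delta> (subtreeV n E e) = (\<lambda>j. x j + d j)"
    by (auto simp: shiftv_def d_def chi_def)
  have small: "small_shift d" unfolding d_def using \<delta> by (intro small_shift_scaled_chi) auto
  have "tangent_feasible d"
    unfolding d_def using tangent_feasible_scale[OF tangent_feasible_chi_subtree[OF e]] \<delta> by simp
  then show "feasS m n Ap Am (shiftv x \<delta> (subtreeV n E e))"
    unfolding shift using feasS_shift_iff[OF small] by simp
  have "obj_change d < 0"
    unfolding d_def using obj_change_scale[of \<delta>] \<delta> neg by (simp add: mult_pos_neg)
  then show "objf n p C mup mum (shiftv x \<delta> (subtreeV n E e)) < objf n p C mup mum x"
    unfolding shift objf_shift[OF small] by simp
qed

lemma small_shift_near:
  obtains \<delta> where "0 < \<delta>" "\<And>y. \<forall>j<n. \<bar>x j - y j\<bar> < \<delta> \<Longrightarrow> small_shift (\<lambda>j. y j - x j)"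
proof -
  define P where "P = {g \<in> gaps m n p Ap Am C x. 0 < g}"
  have "finite P" using gaps_finite by (simp add: P_def)
  define \<delta> where "\<delta> = (if P = {} then 1 else Min P / 2)"
  have "0 < \<delta>"
    using Min_in[OF \<open>finite P\<close>] by (auto simp: \<delta>_def P_def)
  moreover have "small_shift (\<lambda>j. y j - x j)" if y: "\<forall>j<n. \<bar>x j - y j\<bar> < \<delta>" for y
    unfolding small_shift_def
  proof (intro ballI impI allI)
    fix g j j' assume "g \<in> gaps m n p Ap Am C x" "0 < g" "j < n" "j' < n"
    then have "2 * \<delta> \<le> g" "\<bar>x j - y j\<bar> < \<delta>" "\<bar>x j' - y j'\<bar> < \<delta>"
      using Min_le[OF \<open>finite P\<close>, of g] y by (auto simp: \<delta>_def P_def)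
    then show "y j - x j - (y j' - x j') < g" by linarith
  qed
  ultimately show ?thesis using that by blast
qed

lemma descent_perturbation:
  assumes "\<not> local_opt m n p Ap Am C mup mum x"
  obtains d where "small_shift d" "tangent_feasible d" "obj_change d < 0"
proof -
  obtain \<delta> where \<delta>: "0 < \<delta>" "\<And>y. \<forall>j<n. \<bar>x j - y j\<bar> < \<delta> \<Longrightarrow> small_shift (\<lambda>j. y j - x j)"
    using small_shift_near by blast
  have "\<not> (\<forall>y. feasS m n Ap Am y \<and> (\<forall>j<n. \<bar>x j - y j\<bar> < \<delta>)
      \<longrightarrow> objf n p C mup mum y \<ge> objf n p C mup mum x)"
    using assms feas \<delta>(1) unfolding local_opt_def by blast
  then obtain y where y: "feasS m n Ap Am y" "\<forall>j<n. \<bar>x j - y j\<bar> < \<delta>"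
    "objf n p C mup mum y < objf n p C mup mum x"
    by (auto simp: not_le)
  have shift: "(\<lambda>j. x j + (y j - x j)) = y" by simp
  have small: "small_shift (\<lambda>j. y j - x j)" using \<delta>(2) y(2) .
  show ?thesis
  proof
    show "tangent_feasible (\<lambda>j. y j - x j)" using feasS_shift_iff[OF small] y(1) shift by simp
    show "obj_change (\<lambda>j. y j - x j) < 0" using objf_shift[OF small] y(3) shift by simp
  qed (rule small)
qed

lemma Ecirc_subtree_descent:
  assumes "\<not> local_opt m n p Ap Am C mup mum x"
  obtains e where "e \<in> Ecirc m n p Ap Am C x" "obj_change (chi (subtreeV n E e)) < 0"
proof -
  obtain d where d: "small_shift d" "tangent_feasible d" "obj_change d < 0"
    using descent_perturbation[OF assms] .
  then have "(\<Sum>e\<in>E. edge_drop d e * obj_change (chi (subtreeV n E e))) < 0"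
    using obj_change_tree_decomposition[of d] by simp
  then obtain e where e: "e \<in> E" and "edge_drop d e * obj_change (chi (subtreeV n E e)) < 0"
    by (meson not_le sum_nonneg)
  with edge_drop_nonneg[OF e, of d]
  have pos: "0 < edge_drop d e" and neg: "obj_change (chi (subtreeV n E e)) < 0"
    by (auto simp: mult_less_0_iff)
  from Ecirc_if_edge_drop_pos[OF e pos d(2)] neg show ?thesis by (rule that)
qed

end

theorem theorem5p3:
  fixes m n p :: nat
    and Ap Am C :: "nat \<Rightarrow> nat \<Rightarrow> ereal"
    and mup mum :: "nat \<Rightarrow> nat"
    and x :: "nat \<Rightarrow> real"
  assumes noinf: "\<forall>i<m. \<forall>j<n. Ap i j \<noteq> \<infinity> \<and> Am i j \<noteq> \<infinity>" "\<forall>k<p. \<forall>j<n. C k j \<noteq> \<infinity>"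
    and rowA: "\<forall>i<m. \<exists>j<n. amat Ap Am i j \<noteq> -\<infinity>"
    and rowC: "\<forall>k<p. \<exists>j<n. C k j \<noteq> -\<infinity>"
    and balance: "(\<Sum>k<p. mup k) = (\<Sum>j<n. mum j)"
    and conn: "connected_on (tverts m n p) (supp_edges m n p Ap Am C)"
    and nondeg: "nondegenerate m n p Ap Am C"
    and feas: "feasS m n Ap Am x"
    and tree: "spanning_tree (tverts m n p) (tedges m n p Ap Am C x)"
    and notopt: "\<not> local_opt m n p Ap Am C mup mum x"
  shows "\<exists>e\<in>Ecirc m n p Ap Am C x.
           descent_dir m n p Ap Am C mup mum (subtreeV n (tedges m n p Ap Am C x) e) x"
proof -
  have "0 < n"
  proof (rule ccontr)
    assume "\<not> 0 < n"
    then have "n = 0" "p = 0" using rowC by auto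
    then have "local_opt m n p Ap Am C mup mum x"
      using feas by (auto simp: local_opt_def objf_def intro: exI[of _ 1])
    with notopt show False ..
  qed
  then interpret tangent_tree m n p Ap Am C mup mum x
    using noinf rowA rowC balance feas tree by unfold_locales auto
  obtain e where "e \<in> Ecirc m n p Ap Am C x" "obj_change (chi (subtreeV n E e)) < 0"
    using Ecirc_subtree_descent[OF notopt] .
  then show ?thesis using descent_dir_subtree by blast
qed

end
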